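(* Let $M_1,M_2\in\mathbb{Z}^{r\times n}$, let $\mathcal{F}$ be the set of characteristic vectors $x\in\{0,1\}^n$ of $r$-subsets of $\{1,\dots,n\}$ that are bases of both vectorial matroids represented by $M_1$ and $M_2$ (i.e., the $r\times r$ column submatrices $M_1^x$ and $M_2^x$ indexed by the support of $x$ are both nonsingular), and let $W\in\mathbb{Z}_+^{d\times n}$. For $u\in\mathbb{Z}^d_+$ define the polynomial $g_u(a):=\sum\{\det(M_1^x)\det(M_2^x)\,a^x : x\in\mathcal{F},\ Wx=u\}$ in variables $a=(a_1,\dots,a_n)$, where $a^x=\prod_j a_j^{x_j}$, and let $U:=\{Wx:x\in\mathcal{F}\}$. Suppose independent random variables uniformly distributed on $\{1,2,\dots,s\}$ are substituted for $a_1,\dots,a_n$, and let $\widehat U:=\{u\in U: g_u(a)\ne0\}$. Then for every $u\in U$, the probability that $u\notin\widehat U$ is at most $r/s$.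
   Context: $\widehat U$ equals the support (set of exponent vectors with nonzero coefficient) of the polynomial $\det(M_1(\gamma)M_2^{\top})=\sum_{u\in U}g_u(a)b^u$ in variables $b=(b_1,\dots,b_d)$, where $M_1(\gamma)$ is the matrix whose $j$-th column is the $j$-th column of $M_1$ multiplied by $\gamma_j=a_j\prod_{i=1}^d b_i^{W_{i,j}}$. *)

theory Defs
  imports "Jordan_Normal_Form.Determinant"
begin

text \<open>Column submatrix of M indexed by the set S of column indices (columns taken in
increasing order). For S of size r and M with r rows this is the r x r matrix M^x.\<close>
definition colsub :: "'a mat \<Rightarrow> nat set \<Rightarrow> 'a mat" where
  "colsub M S = mat (dim_row M) (card S) (\<lambda>(i,j). M $$ (i, sorted_list_of_set S ! j))"

text \<open>The family F, represented by supports S of the characteristic vectors x: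
r-subsets of {0..<n} that are bases of both matroids.\<close>
definition common_bases :: "int mat \<Rightarrow> int mat \<Rightarrow> nat set set" where
  "common_bases M1 M2 = {S. S \<subseteq> {0..<dim_col M1} \<and> card S = dim_row M1 \<and>
      det (colsub M1 S) \<noteq> 0 \<and> det (colsub M2 S) \<noteq> 0}"

text \<open>W x for the characteristic vector x of S, W a d x n matrix over nat.\<close>
definition Wvec :: "nat \<Rightarrow> (nat \<Rightarrow> nat \<Rightarrow> nat) \<Rightarrow> nat set \<Rightarrow> nat list" where
  "Wvec d W S = map (\<lambda>i. \<Sum>j\<in>S. W i j) [0..<d]"

definition g_eval :: "int mat \<Rightarrow> int mat \<Rightarrow> nat \<Rightarrow> (nat \<Rightarrow> nat \<Rightarrow> nat) \<Rightarrow> nat list \<Rightarrow> (nat \<Rightarrow> int) \<Rightarrow> int" where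
  "g_eval M1 M2 d W u a = (\<Sum>S\<in>{S \<in> common_bases M1 M2. Wvec d W S = u}.
      det (colsub M1 S) * det (colsub M2 S) * (\<Prod>j\<in>S. a j))"

end

theory Submission
  imports Defs
begin

text \<open>The polynomial \<open>g\<^sub>u\<close> is multilinear: its monomials \<open>a\<^sup>x\<close> are distinct, of degree \<open>r\<close>,
  and have the nonzero coefficients \<open>det(M\<^sub>1\<^sup>x) det(M\<^sub>2\<^sup>x)\<close>; it is nonzero since \<open>u \<in> U\<close>.
  The bound is then the Schwartz--Zippel lemma, which for multilinear polynomials follows by
  induction on the variables: singling out one variable \<open>a\<^sub>x\<close> writes \<open>p = q\<^sub>0 + a\<^sub>x q\<^sub>1\<close>
  with \<open>q\<^sub>1\<close> multilinear of degree \<open>\<le> r - 1\<close>. Where \<open>q\<^sub>1 \<noteq> 0\<close> at most one value of \<open>a\<^sub>x\<close>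
  is a root, and by induction \<open>q\<^sub>1\<close> vanishes on at most a fraction \<open>(r - 1)/s\<close> of the grid.\<close>

lemma card_PiE_insert_filter:
  assumes "finite V" "x \<notin> V" "finite A"
  shows "card {a \<in> PiE (insert x V) (\<lambda>_. A). P a} =
         (\<Sum>g\<in>PiE V (\<lambda>_. A). card {y \<in> A. P (g(x := y))})"
proof -
  let ?f = "\<lambda>(y, g). g(x := y)" and ?swap = "\<lambda>(g, y). (y, g)"
  let ?S = "SIGMA g:PiE V (\<lambda>_. A). {y \<in> A. P (g(x := y))}"
  have "{a \<in> PiE (insert x V) (\<lambda>_. A). P a} = ?f ` ?swap ` ?S"
    unfolding PiE_insert_eq by force
  moreover have "inj_on ?f (?swap ` ?S)"
    by (rule inj_on_subset[OF inj_combinator[OF assms(2)]]) auto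
  moreover have "inj_on ?swap ?S" by (auto intro: inj_onI)
  ultimately have "card {a \<in> PiE (insert x V) (\<lambda>_. A). P a} = card ?S"
    by (simp add: card_image)
  also have "\<dots> = (\<Sum>g\<in>PiE V (\<lambda>_. A). card {y \<in> A. P (g(x := y))})"
    using assms by (intro card_SigmaI finite_PiE) auto
  finally show ?thesis .
qed

lemma card_linear_roots_le_1:
  fixes p q :: "'a :: idom"
  assumes "finite A" "q \<noteq> 0"
  shows "card {y \<in> A. p + y * q = 0} \<le> 1"
proof -
  have "y = z" if "p + y * q = 0" "p + z * q = 0" for y z
    using that assms(2) by (metis add_left_cancel mult_cancel_right)
  then show ?thesis using assms(1) by (simp add: card_le_Suc0_iff_eq)
qed

lemma card_zeros_PiE_insert_const:
  fixes p q :: "('i \<Rightarrow> 'a :: zero) \<Rightarrow> 'a"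
  assumes "finite V" "x \<notin> V" "finite A"
    and "\<And>g y. p (g(x := y)) = q g"
  shows "card {a \<in> PiE (insert x V) (\<lambda>_. A). p a = 0} = card {g \<in> PiE V (\<lambda>_. A). q g = 0} * card A"
proof -
  have "card {a \<in> PiE (insert x V) (\<lambda>_. A). p a = 0} =
        (\<Sum>g\<in>PiE V (\<lambda>_. A). if q g = 0 then card A else 0)"
    unfolding card_PiE_insert_filter[OF assms(1-3)] assms(4) by (intro sum.cong) auto
  also have "\<dots> = card {g \<in> PiE V (\<lambda>_. A). q g = 0} * card A"
    using assms(1,3) by (simp add: sum.If_cases finite_PiE Int_def conj_commute)
  finally show ?thesis .
qed

lemma card_zeros_PiE_insert_linear:
  fixes p q0 q1 :: "('i \<Rightarrow> 'a :: idom) \<Rightarrow> 'a"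
  assumes "finite V" "x \<notin> V" "finite A"
    and "\<And>g y. p (g(x := y)) = q0 g + y * q1 g"
  shows "card {a \<in> PiE (insert x V) (\<lambda>_. A). p a = 0}
           \<le> card {g \<in> PiE V (\<lambda>_. A). q1 g = 0} * card A + card A ^ card V"
proof -
  have roots: "card {y \<in> A. q0 g + y * q1 g = 0} \<le> (if q1 g = 0 then card A else 0) + 1" for g
    using card_linear_roots_le_1[OF assms(3), of "q1 g" "q0 g"]
      card_mono[OF assms(3), of "{y \<in> A. q0 g + y * q1 g = 0}"]
    by (cases "q1 g = 0") auto
  have "card {a \<in> PiE (insert x V) (\<lambda>_. A). p a = 0} \<le>
        (\<Sum>g\<in>PiE V (\<lambda>_. A). (if q1 g = 0 then card A else 0) + 1)"
    unfolding card_PiE_insert_filter[OF assms(1-3)] assms(4) by (intro sum_mono roots)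
  also have "\<dots> = card {g \<in> PiE V (\<lambda>_. A). q1 g = 0} * card A + card A ^ card V"
    unfolding sum.distrib using assms(1,3)
    by (simp add: sum.If_cases finite_PiE card_PiE Int_def conj_commute)
  finally show ?thesis .
qed

definition multilinear_eval :: "'i set set \<Rightarrow> ('i set \<Rightarrow> 'a) \<Rightarrow> ('i \<Rightarrow> 'a) \<Rightarrow> 'a :: comm_semiring_1" where
  "multilinear_eval F c a = (\<Sum>S\<in>F. c S * (\<Prod>j\<in>S. a j))"

lemma multilinear_eval_fun_upd:
  assumes "finite F" "\<And>S. S \<in> F \<Longrightarrow> finite S"
  shows "multilinear_eval F c (g(x := y)) =
         multilinear_eval {S \<in> F. x \<notin> S} c g
         + y * multilinear_eval ((\<lambda>S. S - {x}) ` {S \<in> F. x \<in> S}) (\<lambda>T. c (insert x T)) g"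
proof -
  let ?F0 = "{S \<in> F. x \<notin> S}" and ?F1 = "{S \<in> F. x \<in> S}"
  have "multilinear_eval F c (g(x := y)) =
        (\<Sum>S\<in>?F0. c S * (\<Prod>j\<in>S. (g(x := y)) j)) + (\<Sum>S\<in>?F1. c S * (\<Prod>j\<in>S. (g(x := y)) j))"
    unfolding multilinear_eval_def using assms(1) by (subst sum.union_disjoint[symmetric]) (auto intro: sum.cong)
  also have "(\<Sum>S\<in>?F0. c S * (\<Prod>j\<in>S. (g(x := y)) j)) = multilinear_eval ?F0 c g"
    unfolding multilinear_eval_def by (intro sum.cong refl arg_cong2[where f="(*)"] prod.cong) auto
  also have "(\<Sum>S\<in>?F1. c S * (\<Prod>j\<in>S. (g(x := y)) j)) = (\<Sum>S\<in>?F1. y * (c S * (\<Prod>j\<in>S - {x}. g j)))"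
  proof (intro sum.cong refl)
    fix S assume "S \<in> ?F1"
    moreover have "(\<Prod>j\<in>S - {x}. (g(x := y)) j) = (\<Prod>j\<in>S - {x}. g j)"
      by (intro prod.cong) auto
    ultimately have "(\<Prod>j\<in>S. (g(x := y)) j) = y * (\<Prod>j\<in>S - {x}. g j)"
      using assms(2) prod.remove[of S x "g(x := y)"] by simp
    then show "c S * (\<Prod>j\<in>S. (g(x := y)) j) = y * (c S * (\<Prod>j\<in>S - {x}. g j))"
      by (simp add: ac_simps)
  qed
  also have "\<dots> = y * multilinear_eval ((\<lambda>S. S - {x}) ` ?F1) (\<lambda>T. c (insert x T)) g"
  proof -
    have "inj_on (\<lambda>S. S - {x}) ?F1"
      by (rule inj_onI) (metis (mono_tags) insert_Diff mem_Collect_eq)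
    then show ?thesis
      unfolding multilinear_eval_def sum_distrib_left[symmetric]
      by (simp add: sum.reindex, intro arg_cong[where f="(*) y"] sum.cong) (auto simp: insert_absorb)
  qed
  finally show ?thesis .
qed

lemma card_multilinear_zeros:
  fixes c :: "'i set \<Rightarrow> 'a :: idom"
  assumes "finite V" "finite A"
    and "F \<subseteq> Pow V" "F \<noteq> {}" "\<And>S. S \<in> F \<Longrightarrow> card S \<le> r" "\<And>S. S \<in> F \<Longrightarrow> c S \<noteq> 0"
  shows "card {a \<in> PiE V (\<lambda>_. A). multilinear_eval F c a = 0} * card A \<le> r * card A ^ card V"
  using assms(1,3-6)
proof (induction V arbitrary: F c r rule: finite_induct)
  case empty
  then have "F = {{}}" by auto
  then show ?case using empty.prems by (simp add: multilinear_eval_def)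
next
  case (insert x V)
  let ?zeros = "\<lambda>V p. card {a \<in> PiE V (\<lambda>_. A). p a = 0}"
  define F0 where "F0 = {S \<in> F. x \<notin> S}"
  define G where "G = (\<lambda>S. S - {x}) ` {S \<in> F. x \<in> S}"
  define d where "d T = c (insert x T)" for T
  have "finite (insert x V)" using insert.hyps(1) by simp
  then have fin: "finite F" "\<And>S. S \<in> F \<Longrightarrow> finite S"
    using insert.prems(1) by (auto intro: finite_subset)
  have split: "multilinear_eval F c (g(x := y)) = multilinear_eval F0 c g + y * multilinear_eval G d g"
    for g y unfolding F0_def G_def d_def using fin by (rule multilinear_eval_fun_upd)
  show ?case
  proof (cases "G = {}")
    case True
    then have "F0 = F" by (auto simp: F0_def G_def)
    have "?zeros (insert x V) (multilinear_eval F c) = ?zeros V (multilinear_eval F c) * card A"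
      using split True \<open>F0 = F\<close> by (intro card_zeros_PiE_insert_const[OF insert.hyps assms(2)])
        (simp add: multilinear_eval_def)
    moreover have "?zeros V (multilinear_eval F c) * card A \<le> r * card A ^ card V"
    proof (rule insert.IH)
      show "F \<subseteq> Pow V" using insert.prems(1) \<open>F0 = F\<close> unfolding F0_def by blast
    qed (use insert.prems in auto)
    ultimately show ?thesis using insert.hyps
      by (simp add: mult_right_mono ac_simps)
  next
    case False
    have G_sub: "G \<subseteq> Pow V" using insert.prems(1) by (auto simp: G_def)
    have G_card: "card T \<le> r - 1" if "T \<in> G" for T
      using that insert.prems(1,3) by (force simp: G_def dest: finite_subset[OF _ insert.hyps(1)])
    have G_coeff: "d T \<noteq> 0" if "T \<in> G" for T
      using that insert.prems(4) by (auto simp: G_def d_def insert_absorb)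
    obtain S where "S \<in> F" "x \<in> S" using False by (auto simp: G_def)
    then have "r \<ge> 1"
      using insert.prems(3)[OF \<open>S \<in> F\<close>] \<open>x \<in> S\<close> fin(2) card_gt_0_iff[of S] by auto
    have "?zeros (insert x V) (multilinear_eval F c) \<le> ?zeros V (multilinear_eval G d) * card A + card A ^ card V"
      using split by (rule card_zeros_PiE_insert_linear[OF insert.hyps assms(2)])
    moreover have "?zeros V (multilinear_eval G d) * card A \<le> (r - 1) * card A ^ card V"
      using G_sub False G_card G_coeff by (rule insert.IH)
    moreover have "(r - 1) * card A ^ card V + card A ^ card V = r * card A ^ card V"
      using \<open>r \<ge> 1\<close> by (cases r) auto
    ultimately have "?zeros (insert x V) (multilinear_eval F c) \<le> r * card A ^ card V"
      by linarith
    then show ?thesis using insert.hyps by (simp add: mult_right_mono ac_simps)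
  qed
qed

theorem proposition2:
  fixes M1 M2 :: "int mat" and r n d s :: nat and W :: "nat \<Rightarrow> nat \<Rightarrow> nat" and u :: "nat list"
  assumes "M1 \<in> carrier_mat r n" and "M2 \<in> carrier_mat r n"
    and "s \<ge> 1"
    and "u \<in> Wvec d W ` common_bases M1 M2"
  shows "real (card {a \<in> PiE {0..<n} (\<lambda>_. {1..int s}). g_eval M1 M2 d W u a = 0})
           / real s ^ n \<le> real r / real s"
proof -
  define F where "F = {S \<in> common_bases M1 M2. Wvec d W S = u}"
  define c where "c S = det (colsub M1 S) * det (colsub M2 S)" for S
  define Z where "Z = card {a \<in> PiE {0..<n} (\<lambda>_. {1..int s}). g_eval M1 M2 d W u a = 0}"
  have "g_eval M1 M2 d W u = multilinear_eval F c"
    by (simp add: fun_eq_iff g_eval_def multilinear_eval_def F_def c_def)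
  moreover have "F \<subseteq> Pow {0..<n}" "\<And>S. S \<in> F \<Longrightarrow> card S \<le> r"
    using assms(1) by (auto simp: F_def common_bases_def)
  moreover have "F \<noteq> {}" using assms(4) by (auto simp: F_def)
  moreover have "\<And>S. S \<in> F \<Longrightarrow> c S \<noteq> 0" by (auto simp: F_def common_bases_def c_def)
  ultimately have "Z * s \<le> r * s ^ n"
    unfolding Z_def using card_multilinear_zeros[of "{0..<n}" "{1..int s}" F r c] by simp
  then have "real Z * real s \<le> real r * real s ^ n"
    by (simp only: of_nat_mult[symmetric] of_nat_power[symmetric] of_nat_le_iff)
  then show ?thesis
    unfolding Z_def[symmetric] using assms(3) by (simp add: field_simps)
qed

end
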